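(* Let $M>0$, $g>0$, $U_{max}>0$ and $\epsilon>0$, and set $\gamma=\dfrac{\pi}{2\arctan(\epsilon U_{max})}$. For $f\in\mathbb{R}$ define $\bar\theta(f)=\sigma_{\pi/2}\big(\gamma\arctan(\epsilon f)\big)$ and $u_1(f)=\dfrac{f}{\sin\bar\theta(f)}$ for $f\neq 0$, $u_1(0)=\dfrac{1}{\gamma\epsilon}$. Let $\bar\alpha\in[0,\pi]$ be any steady-state inclination with $|Mg\cos\bar\alpha|\le U_{max}$, and let $\bar f_t=Mg\cos\bar\alpha$ be the corresponding steady-state tangential force. Then the steady-state thrust $\bar u_1=u_1(\bar f_t)$ satisfies $|\bar u_1|\le U_{max}$.
   Context: The saturation function is $\sigma_\lambda(x)=\operatorname{sign}(x)\min(|x|,\lambda)$ for $\lambda\ge 0$. Setting: a planar rigid object of inclination $\alpha$ (w.r.t. the horizon) is carried at one end by a ground vehicle and at the other end by a quadrotor producing thrust $u_1$ with constraint $0\le u_1\le U_{max}$; $M$ is the apparent mass of UAV and object and $g$ the gravitational acceleration. At an equilibrium with inclination $\bar\alpha$ the controller demands the tangential force $\bar f_t=Mg\cos\bar\alpha$, which is produced by choosing the relative UAV attitude $\bar\theta(\bar f_t)$ and thrust $u_1(\bar f_t)=\bar f_t/\sin\bar\theta(\bar f_t)$ (so that $u_1\sin\bar\theta=\bar f_t$). *)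

theory Defs
  imports Complex_Main
begin

definition sat :: "real \<Rightarrow> real \<Rightarrow> real" where
  "sat lam x = sgn x * min \<bar>x\<bar> lam"

definition gam :: "real \<Rightarrow> real \<Rightarrow> real" where
  "gam \<epsilon> Umax = pi / (2 * arctan (\<epsilon> * Umax))"

definition theta_bar :: "real \<Rightarrow> real \<Rightarrow> real \<Rightarrow> real" where
  "theta_bar \<epsilon> Umax f = sat (pi/2) (gam \<epsilon> Umax * arctan (\<epsilon> * f))"

definition u1 :: "real \<Rightarrow> real \<Rightarrow> real \<Rightarrow> real" where
  "u1 \<epsilon> Umax f = (if f = 0 then 1 / (gam \<epsilon> Umax * \<epsilon>)
                     else f / sin (theta_bar \<epsilon> Umax f))"

end

theory Submission
  imports Defs "HOL-Analysis.Complex_Transcendental" "HOL-Decision_Procs.Approximation_Bounds"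
begin

text \<open>
  Write \<open>a = arctan (\<epsilon> Umax)\<close>, so that \<open>theta_bar f = (pi/2) (arctan (\<epsilon> f) / a)\<close> whenever
  \<open>0 < f \<le> Umax\<close>; no saturation takes place. Jordan's inequality \<open>sin (pi/2 s) \<ge> s\<close> on
  \<open>[0, 1]\<close> gives \<open>sin (theta_bar f) \<ge> arctan (\<epsilon> f) / a\<close>, and since \<open>arctan x / x\<close> is
  decreasing this is at least \<open>f / Umax\<close>; hence \<open>u1 f = f / sin (theta_bar f) \<le> Umax\<close>.
  Negative \<open>f\<close> reduce to positive ones because \<open>u1\<close> is even, and
  \<open>u1 0 = 2a / (pi \<epsilon>) \<le> Umax\<close> follows from \<open>arctan x \<le> x\<close>.
\<close>

lemma mult_cos_le_sin:
  fixes x :: real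
  assumes "0 \<le> x" "x \<le> pi"
  shows "x * cos x \<le> sin x"
proof -
  have "sin 0 - 0 * cos 0 \<le> sin x - x * cos x"
  proof (rule DERIV_nonneg_imp_nondecreasing[OF \<open>0 \<le> x\<close>])
    fix z assume z: "0 \<le> z" "z \<le> x"
    have "((\<lambda>x. sin x - x * cos x) has_real_derivative z * sin z) (at z)"
      by (auto intro!: derivative_eq_intros)
    moreover have "0 \<le> z * sin z"
      using z assms by (simp add: sin_ge_zero)
    ultimately show "\<exists>y. ((\<lambda>x. sin x - x * cos x) has_real_derivative y) (at z) \<and> 0 \<le> y"
      by blast
  qed
  then show ?thesis by simp
qed

lemma sin_divide_antimono:
  fixes x y :: real
  assumes "0 < x" "x \<le> y" "y \<le> pi"
  shows "sin y / y \<le> sin x / x"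
  using assms
  by (intro DERIV_nonpos_imp_nonincreasing[where f = "\<lambda>x. sin x / x"])
    (auto intro!: derivative_eq_intros divide_nonpos_nonneg simp: mult_cos_le_sin mult.commute)

lemma jordan_inequality:
  fixes x :: real
  assumes "0 \<le> x" "x \<le> pi / 2"
  shows "2 / pi * x \<le> sin x"
proof (cases "x = 0")
  case False
  then have "sin (pi / 2) / (pi / 2) \<le> sin x / x"
    using sin_divide_antimono[of x "pi / 2"] assms by simp
  then show ?thesis
    using False assms by (simp add: field_simps)
qed simp

lemma sat_eq_self: "\<bar>x\<bar> \<le> lam \<Longrightarrow> sat lam x = x"
  by (auto simp: sat_def sgn_if)

lemma u1_uminus: "u1 \<epsilon> Umax (- f) = u1 \<epsilon> Umax f"
  by (simp add: u1_def theta_bar_def sat_def arctan_minus sgn_minus)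

lemma theta_bar_unsaturated:
  assumes "\<epsilon> > 0" "0 < f" "f \<le> Umax"
  shows "theta_bar \<epsilon> Umax f = pi / 2 * (arctan (\<epsilon> * f) / arctan (\<epsilon> * Umax))"
proof -
  define r where "r = arctan (\<epsilon> * f) / arctan (\<epsilon> * Umax)"
  have num_pos: "0 < arctan (\<epsilon> * f)" and num_le: "arctan (\<epsilon> * f) \<le> arctan (\<epsilon> * Umax)"
    using assms by (simp_all add: arctan_le_iff)
  then have den_pos: "0 < arctan (\<epsilon> * Umax)"
    by linarith
  have "0 < r"
    unfolding r_def using num_pos den_pos by (rule divide_pos_pos)
  moreover have "r \<le> 1"
    unfolding r_def using den_pos num_le by (simp only: divide_le_eq_1_pos)
  ultimately have "\<bar>pi / 2 * r\<bar> \<le> pi / 2"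
    by simp
  moreover have "gam \<epsilon> Umax * arctan (\<epsilon> * f) = pi / 2 * r"
    by (simp add: gam_def r_def)
  ultimately show ?thesis
    by (simp add: theta_bar_def sat_eq_self r_def)
qed

lemma divide_le_sin_theta_bar:
  assumes "\<epsilon> > 0" "0 < f" "f \<le> Umax"
  shows "f / Umax \<le> sin (theta_bar \<epsilon> Umax f)"
proof -
  define a where "a = arctan (\<epsilon> * Umax)"
  define s where "s = arctan (\<epsilon> * f) / a"
  have "0 < a"
    using assms by (simp add: a_def)
  have "\<epsilon> * f * a \<le> \<epsilon> * Umax * arctan (\<epsilon> * f)"
    using arctan_mult_mono[of "\<epsilon> * f" "\<epsilon> * Umax"] assms by (simp add: a_def)
  then have "f / Umax \<le> s"
    using assms \<open>0 < a\<close> by (simp add: s_def field_simps)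
  moreover have "0 \<le> s" "s \<le> 1"
    using assms \<open>0 < a\<close> by (simp_all add: s_def a_def arctan_le_iff)
  then have "s \<le> sin (pi / 2 * s)"
    using jordan_inequality[of "pi / 2 * s"] by simp
  ultimately show ?thesis
    using theta_bar_unsaturated[OF assms] by (simp add: s_def a_def)
qed

lemma abs_u1_le_pos:
  assumes "\<epsilon> > 0" "0 < f" "f \<le> Umax"
  shows "\<bar>u1 \<epsilon> Umax f\<bar> \<le> Umax"
proof -
  have bound: "f / Umax \<le> sin (theta_bar \<epsilon> Umax f)"
    by (rule divide_le_sin_theta_bar[OF assms])
  moreover have "0 < f / Umax"
    using assms by simp
  ultimately have sin_pos: "0 < sin (theta_bar \<epsilon> Umax f)"
    by linarith
  have "f \<le> Umax * sin (theta_bar \<epsilon> Umax f)"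
    using bound assms by (simp add: pos_divide_le_eq mult.commute)
  then have "f / sin (theta_bar \<epsilon> Umax f) \<le> Umax"
    using sin_pos by (simp add: pos_divide_le_eq)
  moreover have "0 \<le> f / sin (theta_bar \<epsilon> Umax f)"
    using sin_pos assms by simp
  ultimately show ?thesis
    using assms by (simp add: u1_def)
qed

lemma abs_u1_zero_le:
  assumes "\<epsilon> > 0" "Umax > 0"
  shows "\<bar>u1 \<epsilon> Umax 0\<bar> \<le> Umax"
proof -
  define a where "a = arctan (\<epsilon> * Umax)"
  have "0 < a"
    using assms by (simp add: a_def)
  have "2 * a \<le> 2 * (\<epsilon> * Umax)"
    using arctan_le_self[of "\<epsilon> * Umax"] assms by (simp add: a_def)
  also have "\<dots> \<le> pi * (\<epsilon> * Umax)"
    using pi_gt3 assms by (intro mult_right_mono) auto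
  finally have "2 * a / (pi * \<epsilon>) \<le> Umax"
    using assms by (simp add: pos_divide_le_eq mult.commute mult.left_commute)
  moreover have "u1 \<epsilon> Umax 0 = 2 * a / (pi * \<epsilon>)"
    by (simp add: u1_def gam_def a_def)
  ultimately show ?thesis
    using \<open>0 < a\<close> assms by simp
qed

lemma abs_u1_le:
  assumes "\<epsilon> > 0" "Umax > 0" "\<bar>f\<bar> \<le> Umax"
  shows "\<bar>u1 \<epsilon> Umax f\<bar> \<le> Umax"
proof (cases f "0 :: real" rule: linorder_cases)
  case less
  then show ?thesis
    using abs_u1_le_pos[of \<epsilon> "- f" Umax] assms by (simp add: u1_uminus)
qed (use assms abs_u1_le_pos abs_u1_zero_le in auto)

theorem lemma2:
  fixes M g Umax \<epsilon> \<alpha> :: real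
  assumes "M > 0" and "g > 0" and "Umax > 0" and "\<epsilon> > 0"
    and "0 \<le> \<alpha>" and "\<alpha> \<le> pi"
    and "\<bar>M * g * cos \<alpha>\<bar> \<le> Umax"
  shows "\<bar>u1 \<epsilon> Umax (M * g * cos \<alpha>)\<bar> \<le> Umax"
  using abs_u1_le assms by blast

end
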